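(* Consider $n\ge 3$ agents with additive, identical, normalized valuations, and online algorithms without access to predictions. For any given $a\in(0,1]$, there is no online algorithm that guarantees an $a$-EFX allocation, even if the time horizon $T$ is known to the algorithm in advance.
   Context: Online fair division model: there is a set $N=[n]$ of agents and goods $g_1,\dots,g_T$ arriving one per time step. Each agent $i$ has an additive normalized valuation $v_i$ ($v_i(g_t)\ge0$, $\sum_{t=1}^T v_i(g_t)=1$, $v_i(S)=\sum_{g\in S}v_i(g)$); identical valuations means $v_i=v$ for all $i$. When $g_t$ arrives, its true values are revealed and it must be immediately and irrevocably allocated to one agent. For a bundle $S\ne\emptyset$ and valuation $f$, $\bar S^f=S\setminus\{g\}$ with $g\in\arg\max_{g'\in S}f(S\setminus\{g'\})$, and $\bar\emptyset^f=\emptyset$. For $a\in[0,1]$, an allocation $(A_1,\dots,A_n)$ is $a$-EFX if $v_i(A_i)\ge a\cdot v_i(\bar{A_j}^{v_i})$ for all $i,j$. An algorithm guarantees an $a$-EFX allocation if for every admissible input the final allocation is $a$-EFX with respect to the true valuations. *)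

theory Defs
  imports Main "HOL.Real"
begin

text \<open>Identical valuations: an input of horizon T is the list vs of values v(g_1),...,v(g_T);
  good g_{t+1} is indexed by t < T. Agents are 0..n-1.\<close>

definition admissible_input :: "nat \<Rightarrow> real list \<Rightarrow> bool" where
  "admissible_input T vs \<longleftrightarrow> length vs = T \<and> (\<forall>x\<in>set vs. x \<ge> 0) \<and> sum_list vs = 1"

text \<open>A deterministic online algorithm that knows T: alg T xs is the agent receiving the
  current good, where xs is the list of values revealed so far (current good last).\<close>

definition valid_online_alg :: "nat \<Rightarrow> (nat \<Rightarrow> real list \<Rightarrow> nat) \<Rightarrow> bool" where
  "valid_online_alg n alg \<longleftrightarrow>
     (\<forall>T xs. 1 \<le> length xs \<and> length xs \<le> T \<longrightarrow> alg T xs < n)"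

definition online_alloc :: "(nat \<Rightarrow> real list \<Rightarrow> nat) \<Rightarrow> nat \<Rightarrow> real list \<Rightarrow> nat \<Rightarrow> nat set" where
  "online_alloc alg T vs i = {t. t < T \<and> alg T (take (Suc t) vs) = i}"

definition bundle_val :: "real list \<Rightarrow> nat set \<Rightarrow> real" where
  "bundle_val vs S = (\<Sum>t\<in>S. vs ! t)"

definition efx_bar_val :: "real list \<Rightarrow> nat set \<Rightarrow> real" where
  "efx_bar_val vs S = (if S = {} then 0 else Max ((\<lambda>g. bundle_val vs (S - {g})) ` S))"

definition is_a_EFX :: "nat \<Rightarrow> real \<Rightarrow> real list \<Rightarrow> (nat \<Rightarrow> nat set) \<Rightarrow> bool" where
  "is_a_EFX n a vs A \<longleftrightarrow>
     (\<forall>i<n. \<forall>j<n. bundle_val vs (A i) \<ge> a * efx_bar_val vs (A j))"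

end

theory Submission
  imports Defs
begin

text \<open>The adversary uses horizon n + 1 and simulates the deterministic algorithm. It offers
  small goods whose values grow by a factor 2/a per step until the algorithm first gives a good
  to an agent who already holds one; all later goods but the last are worth 0, and the last good
  carries the remaining value, at least 3/4. If the receiver of the last good holds another good,
  every other agent, whose bundle is worth at most a/4, violates a-EFX towards her. Otherwise the
  first n goods went to n - 1 agents, so the clash happened; its agent holds an earlier good and
  the clashing good, and a third agent holds at most one good offered before the clash, worth
  less than a times the clashing good.\<close>

lemma nth_le_efx_bar_val:
  assumes "finite S" "\<forall>t\<in>S. 0 \<le> vs ! t" "g \<in> S" "h \<in> S" "g \<noteq> h"
  shows "vs ! h \<le> efx_bar_val vs S"
proof -
  have "vs ! h \<le> bundle_val vs (S - {g})"
    unfolding bundle_val_def using assms by (intro member_le_sum) auto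
  also have "\<dots> \<le> efx_bar_val vs S"
    unfolding efx_bar_val_def using assms by (auto intro!: Max_ge)
  finally show ?thesis .
qed

lemma not_is_a_EFX_if_envy:
  assumes "0 \<le> a" "i < n" "j < n" "finite (A i)" "\<forall>t\<in>A i. 0 \<le> vs ! t"
    and "g \<in> A i" "h \<in> A i" "g \<noteq> h"
    and "bundle_val vs (A j) < a * vs ! h"
  shows "\<not> is_a_EFX n a vs A"
proof -
  have "a * vs ! h \<le> a * efx_bar_val vs (A i)"
    using assms by (intro mult_left_mono nth_le_efx_bar_val) auto
  then show ?thesis
    unfolding is_a_EFX_def using assms(2,3,9) by force
qed

lemma finite_online_alloc: "finite (online_alloc alg T vs i)"
  unfolding online_alloc_def by simp

lemma online_alloc_nonneg:
  assumes "admissible_input T vs" "t \<in> online_alloc alg T vs i"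
  shows "0 \<le> vs ! t"
  using assms unfolding admissible_input_def online_alloc_def by auto

definition first_repeat :: "(nat \<Rightarrow> 'a) \<Rightarrow> nat \<Rightarrow> nat" where
  "first_repeat f n = (LEAST t. t = n \<or> (\<exists>s<t. f s = f t))"

lemma first_repeat_le: "first_repeat f n \<le> n"
  unfolding first_repeat_def by (rule Least_le) simp

lemma first_repeat_repeats:
  assumes "first_repeat f n < n"
  shows "\<exists>s<first_repeat f n. f s = f (first_repeat f n)"
proof -
  have "first_repeat f n = n \<or> (\<exists>s<first_repeat f n. f s = f (first_repeat f n))"
    using LeastI[of "\<lambda>t. t = n \<or> (\<exists>s<t. f s = f t)" n]
    unfolding first_repeat_def by blast
  with assms show ?thesis by simp
qed

lemma inj_on_first_repeat: "inj_on f {..<first_repeat f n}"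
proof (rule linorder_inj_onI')
  fix s t assume "t \<in> {..<first_repeat f n}" "s < t"
  then show "f s \<noteq> f t"
    using not_less_Least[of t "\<lambda>t. t = n \<or> (\<exists>s<t. f s = f t)"]
    unfolding first_repeat_def by auto
qed

lemma first_repeat_less:
  assumes "f ` {..<n} \<subseteq> B" "finite B" "card B < n"
  shows "first_repeat f n < n"
proof (rule ccontr)
  assume "\<not> first_repeat f n < n"
  then have "inj_on f {..<n}"
    using inj_on_first_repeat[of f n] first_repeat_le[of f n] by simp
  then have "card {..<n} \<le> card B"
    using assms(1,2) by (rule card_inj_on_le)
  with assms(3) show False by simp
qed

definition geom_weight :: "real \<Rightarrow> nat \<Rightarrow> nat \<Rightarrow> real" where
  "geom_weight a n t = a / (4 * n) * (a / 2) ^ (n - t)"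

lemma geom_weight_pos: "0 < a \<Longrightarrow> 0 < n \<Longrightarrow> 0 < geom_weight a n t"
  unfolding geom_weight_def by simp

lemma sum_geom_weight_le:
  assumes "0 \<le> a" "a \<le> 1"
  shows "(\<Sum>t<n. geom_weight a n t) \<le> a / 4"
proof -
  have "geom_weight a n t \<le> a / (4 * n)" for t
    unfolding geom_weight_def using assms
    by (intro mult_left_le power_le_one) auto
  then have "(\<Sum>t<n. geom_weight a n t) \<le> (\<Sum>t<n. a / (4 * n))"
    by (intro sum_mono)
  also have "\<dots> \<le> a / 4"
    using assms by (cases "n = 0") auto
  finally show ?thesis .
qed

lemma geom_weight_less:
  assumes "0 < a" "a \<le> 1" "0 < n" "s < t" "t \<le> n"
  shows "geom_weight a n s < a * geom_weight a n t"
proof -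
  have "(a / 2) ^ (t - s) \<le> (a / 2) ^ 1"
    using assms by (intro power_decreasing) auto
  moreover have "geom_weight a n s = geom_weight a n t * (a / 2) ^ (t - s)"
    using assms unfolding geom_weight_def by (simp add: power_add[symmetric])
  ultimately have "geom_weight a n s \<le> geom_weight a n t * (a / 2)"
    using geom_weight_pos[of a n t] assms by (simp add: mult_left_mono)
  also have "\<dots> < a * geom_weight a n t"
    using geom_weight_pos[of a n t] assms by simp
  finally show ?thesis .
qed

locale online_efx_adversary =
  fixes n :: nat and a :: real and alg :: "nat \<Rightarrow> real list \<Rightarrow> nat"
  assumes three_le_n: "3 \<le> n" and a_pos: "0 < a" and a_le_one: "a \<le> 1"
    and valid: "valid_online_alg n alg"
begin

abbreviation w :: "nat \<Rightarrow> real" where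
  "w \<equiv> geom_weight a n"

definition probe_owner :: "nat \<Rightarrow> nat" where
  "probe_owner t = alg (Suc n) (map w [0..<Suc t])"

definition clash :: nat where
  "clash = first_repeat probe_owner n"

definition good_value :: "nat \<Rightarrow> real" where
  "good_value t = (if t \<le> clash then w t else 0)"

definition small_total :: real where
  "small_total = (\<Sum>t<n. good_value t)"

definition input :: "real list" where
  "input = map good_value [0..<n] @ [1 - small_total]"

abbreviation alloc :: "nat \<Rightarrow> nat set" where
  "alloc \<equiv> online_alloc alg (Suc n) input"

definition owner :: "nat \<Rightarrow> nat" where
  "owner t = alg (Suc n) (take (Suc t) input)"

lemma w_pos: "0 < w t"
  using geom_weight_pos a_pos three_le_n by simp

lemma length_input: "length input = Suc n"
  unfolding input_def by simp

lemma input_nth: "t < n \<Longrightarrow> input ! t = good_value t"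
  unfolding input_def by (simp add: nth_append)

lemma input_nth_last: "input ! n = 1 - small_total"
  unfolding input_def by (simp add: nth_append)

lemma small_total_le: "small_total \<le> a / 4"
proof -
  have "small_total \<le> (\<Sum>t<n. w t)"
    unfolding small_total_def good_value_def using w_pos by (intro sum_mono) (simp add: less_imp_le)
  also have "\<dots> \<le> a / 4"
    using sum_geom_weight_le a_pos a_le_one by simp
  finally show ?thesis .
qed

lemma input_admissible: "admissible_input (Suc n) input"
proof -
  have "0 \<le> good_value t" for t
    unfolding good_value_def using w_pos[of t] by simp
  moreover have "0 \<le> 1 - small_total"
    using small_total_le a_le_one by simp
  moreover have "sum_list (map good_value [0..<n]) = small_total"
    unfolding small_total_def by (simp add: sum_list_sum_nth atLeast0LessThan)
  ultimately show ?thesis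
    unfolding admissible_input_def input_def by auto
qed

lemma owner_eq_probe_owner:
  assumes "t < n" "t \<le> clash"
  shows "owner t = probe_owner t"
proof -
  have "take (Suc t) input = map good_value [0..<Suc t]"
    unfolding input_def using assms(1) by (simp add: take_map)
  also have "\<dots> = map w [0..<Suc t]"
    using assms(2) by (auto simp: good_value_def)
  finally show ?thesis
    unfolding owner_def probe_owner_def by simp
qed

lemma owner_less: "t \<le> n \<Longrightarrow> owner t < n"
  using valid unfolding valid_online_alg_def owner_def by (simp add: length_input)

lemma mem_alloc_iff: "t \<in> alloc i \<longleftrightarrow> t \<le> n \<and> owner t = i"
  unfolding online_alloc_def owner_def by auto

lemma not_is_a_EFX_if_last_owner_shares:
  assumes "t < n" "owner t = owner n"
  shows "\<not> is_a_EFX n a input alloc"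
proof -
  define q where "q = (if owner n = 0 then 1 else 0 :: nat)"
  have q: "q < n" "q \<noteq> owner n"
    unfolding q_def using three_le_n by auto
  have "alloc q \<subseteq> {..<n}"
    using q(2) by (auto simp: mem_alloc_iff le_less)
  then have "bundle_val input (alloc q) \<le> bundle_val input {..<n}"
    unfolding bundle_val_def using input_admissible
    by (intro sum_mono2) (auto simp: admissible_input_def)
  also have "\<dots> = small_total"
    unfolding bundle_val_def small_total_def by (simp add: input_nth)
  also have "\<dots> < a * (3 / 4)"
    using small_total_le a_pos by simp
  also have "\<dots> \<le> a * (1 - small_total)"
    using small_total_le a_pos a_le_one by (intro mult_left_mono) auto
  finally have envy: "bundle_val input (alloc q) < a * input ! n"
    by (simp add: input_nth_last)
  show ?thesis
    using assms q envy input_admissible owner_less[of n]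
    by (intro not_is_a_EFX_if_envy[where g = t and h = n])
      (auto simp: finite_online_alloc mem_alloc_iff intro: online_alloc_nonneg less_imp_le a_pos)
qed

lemma clash_less:
  assumes "\<forall>t<n. owner t \<noteq> owner n"
  shows "clash < n"
proof (rule ccontr)
  assume "\<not> clash < n"
  then have "probe_owner t = owner t" if "t < n" for t
    using that owner_eq_probe_owner by simp
  then have "probe_owner ` {..<n} \<subseteq> {..<n} - {owner n}"
    using assms owner_less by auto
  moreover have "card ({..<n} - {owner n}) < n"
    using owner_less[of n] by simp
  ultimately have "first_repeat probe_owner n < n"
    by (intro first_repeat_less) auto
  with \<open>\<not> clash < n\<close> show False
    unfolding clash_def by simp
qed

lemma bundle_val_other_alloc_less:
  assumes "clash < n" "j \<noteq> owner clash" "j \<noteq> owner n"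
  shows "bundle_val input (alloc j) < a * w clash"
proof -
  define B where "B = alloc j \<inter> {..<clash}"
  have "input ! t = 0" if "t \<in> alloc j - B" for t
  proof -
    have "t \<le> n" "clash \<le> t" "owner t = j"
      using that by (auto simp: B_def mem_alloc_iff)
    then have "clash < t" "t < n"
      using assms(2,3) by (auto simp: le_less)
    then show ?thesis
      by (simp add: input_nth good_value_def)
  qed
  then have "bundle_val input (alloc j) = bundle_val input B"
    unfolding bundle_val_def B_def
    by (intro sum.mono_neutral_right) (auto simp: finite_online_alloc)
  also have "\<dots> < a * w clash"
  proof (cases "B = {}")
    case True
    then show ?thesis
      using w_pos[of clash] a_pos by (simp add: bundle_val_def)
  next
    case False
    then obtain u where "u \<in> B" by blast
    have "B = {u}"
    proof (intro equalityI subsetI)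
      fix u' assume "u' \<in> B"
      with \<open>u \<in> B\<close> have "probe_owner u' = probe_owner u" "u \<in> {..<clash}" "u' \<in> {..<clash}"
        using assms(1) owner_eq_probe_owner by (auto simp: B_def mem_alloc_iff)
      then show "u' \<in> {u}"
        using inj_on_first_repeat[of probe_owner n] unfolding clash_def inj_on_def by blast
    qed (use \<open>u \<in> B\<close> in simp)
    moreover have "u < clash"
      using \<open>u \<in> B\<close> by (simp add: B_def)
    ultimately show ?thesis
      using assms(1) geom_weight_less[of a n u clash] a_pos a_le_one
      by (simp add: bundle_val_def input_nth good_value_def)
  qed
  finally show ?thesis .
qed

lemma not_is_a_EFX_if_last_owner_alone:
  assumes "\<forall>t<n. owner t \<noteq> owner n"
  shows "\<not> is_a_EFX n a input alloc"
proof -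
  have "clash < n"
    using assms by (rule clash_less)
  then obtain s where "s < clash" "probe_owner s = probe_owner clash"
    using first_repeat_repeats unfolding clash_def by blast
  then have "owner s = owner clash"
    using \<open>clash < n\<close> owner_eq_probe_owner by simp
  have "\<exists>j<3. j \<noteq> owner clash \<and> j \<noteq> owner n"
    by presburger
  then obtain j where "j < n" "j \<noteq> owner clash" "j \<noteq> owner n"
    using three_le_n by (meson order_less_le_trans)
  then have "bundle_val input (alloc j) < a * input ! clash"
    using bundle_val_other_alloc_less \<open>clash < n\<close> by (simp add: input_nth good_value_def)
  then show ?thesis
    using \<open>s < clash\<close> \<open>owner s = owner clash\<close> \<open>j < n\<close> \<open>clash < n\<close> assms
      input_admissible owner_less[of clash]
    by (intro not_is_a_EFX_if_envy[where g = s and h = clash])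
      (auto simp: finite_online_alloc mem_alloc_iff intro: online_alloc_nonneg less_imp_le a_pos)
qed

lemma input_not_is_a_EFX: "\<not> is_a_EFX n a input alloc"
  using not_is_a_EFX_if_last_owner_shares not_is_a_EFX_if_last_owner_alone by blast

end

theorem theorem3p3:
  fixes n :: nat and a :: real and alg :: "nat \<Rightarrow> real list \<Rightarrow> nat"
  assumes "n \<ge> 3" and "0 < a" and "a \<le> 1"
    and "valid_online_alg n alg"
  shows "\<exists>T vs. admissible_input T vs \<and> \<not> is_a_EFX n a vs (online_alloc alg T vs)"
proof -
  interpret online_efx_adversary n a alg
    using assms by unfold_locales
  show ?thesis
    using input_admissible input_not_is_a_EFX by blast
qed

end
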